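(* Let $G$ be a group and $A$ an additive abelian group with a right $G$-action by group automorphisms. For $k\ge0$ let $\partial_k:\mathcal C^k(G,A)\to\mathcal C^{k+1}(G,A)$ be $(\partial_kc)(g_1,\dots,g_{k+1})=[c(g_1,\dots,g_k)]^{g_{k+1}}-c(g_1,\dots,g_k)$ (so $D^{n}=\partial_{n-1}\cdots\partial_0$). Then for every $n\ge1$: (1) $\delta^n\partial_{n-1}=\partial_n\delta^{n-1}+(-1)^n\partial_n\partial_{n-1}$ on $\mathcal C^{n-1}(G,A)$; (2) $\delta^nD^n=\partial_n\delta^{n-1}D^{n-1}+(-1)^nD^{n+1}$; (3) $\delta^nD^n=-D^{n+1}$ if $n$ is odd and $\delta^nD^n=0$ if $n$ is even (the latter also for $n=0$).
   Context: Right action: $a\mapsto a^g$, $a^{\mathbf e}=a$, $(a^g)^h=a^{gh}$, additive in $a$; $\mathbf e$ the identity of $G$. $\mathcal C^0(G,A)=A$; for $n\ge1$, $\mathcal C^n(G,A)$ is the group of functions $G^n\to A$ vanishing whenever some argument is $\mathbf e$. $D^0=\mathrm{id}_A$ and $D^n=\partial_{n-1}D^{n-1}$. The coboundary operator for the trivial left action, $\delta^n:\mathcal C^n(G,A)\to\mathcal C^{n+1}(G,A)$, is $[\delta^nc](g_1,\dots,g_{n+1})=c(g_2,\dots,g_{n+1})+\sum_{i=1}^{n}(-1)^ic(g_1,\dots,g_ig_{i+1},\dots,g_{n+1})+(-1)^{n+1}c(g_1,\dots,g_n)$; in particular $\delta^0=0$. *)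

theory Defs
  imports "HOL-Algebra.Group"
begin

text \<open>Cochains are represented as functions on lists of group elements; an n-cochain
  is only evaluated on lists of length n with entries in the carrier.\<close>

definition right_action :: "('g, 'b) monoid_scheme \<Rightarrow> ('a::ab_group_add \<Rightarrow> 'g \<Rightarrow> 'a) \<Rightarrow> bool" where
  "right_action G act \<longleftrightarrow>
     (\<forall>a. act a \<one>\<^bsub>G\<^esub> = a) \<and>
     (\<forall>a. \<forall>g\<in>carrier G. \<forall>h\<in>carrier G. act (act a g) h = act a (g \<otimes>\<^bsub>G\<^esub> h)) \<and>
     (\<forall>a b. \<forall>g\<in>carrier G. act (a + b) g = act a g + act b g)"

definition cochains :: "('g, 'b) monoid_scheme \<Rightarrow> nat \<Rightarrow> ('g list \<Rightarrow> 'a::ab_group_add) set" where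
  "cochains G n = {c. \<forall>gs. length gs = n \<and> set gs \<subseteq> carrier G \<and> \<one>\<^bsub>G\<^esub> \<in> set gs \<longrightarrow> c gs = 0}"

definition signed :: "nat \<Rightarrow> 'a::ab_group_add \<Rightarrow> 'a" where
  "signed i x = (if even i then x else - x)"

definition pd :: "('a::ab_group_add \<Rightarrow> 'g \<Rightarrow> 'a) \<Rightarrow> nat \<Rightarrow> ('g list \<Rightarrow> 'a) \<Rightarrow> 'g list \<Rightarrow> 'a" where
  "pd act k c gs = act (c (take k gs)) (gs ! k) - c (take k gs)"

text \<open>Merge the i-th and (i+1)-th entries (1-indexed) of a list.\<close>
definition merge_at :: "('g, 'b) monoid_scheme \<Rightarrow> nat \<Rightarrow> 'g list \<Rightarrow> 'g list" where
  "merge_at G i gs = take (i - 1) gs @ [gs ! (i - 1) \<otimes>\<^bsub>G\<^esub> gs ! i] @ drop (i + 1) gs"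

text \<open>\<open>\<delta>\<^sup>n\<close>: coboundary for the trivial left action, from n-cochains to (n+1)-cochains.\<close>
definition cobd :: "('g, 'b) monoid_scheme \<Rightarrow> nat \<Rightarrow> ('g list \<Rightarrow> 'a::ab_group_add) \<Rightarrow> 'g list \<Rightarrow> 'a" where
  "cobd G n c gs = c (tl gs) + (\<Sum>i=1..n. signed i (c (merge_at G i gs))) + signed (n + 1) (c (take n gs))"

text \<open>\<open>D\<^sup>0 = id\<close>, \<open>D\<^sup>n = \<partial>\<^sub>n\<^sub>-\<^sub>1 D\<^sup>n\<^sup>-\<^sup>1\<close>; an element a of A is the 0-cochain \<open>\<lambda>_. a\<close>.\<close>
fun DD :: "('a::ab_group_add \<Rightarrow> 'g \<Rightarrow> 'a) \<Rightarrow> nat \<Rightarrow> ('g list \<Rightarrow> 'a) \<Rightarrow> 'g list \<Rightarrow> 'a" where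
  "DD act 0 c = c"
| "DD act (Suc n) c = pd act n (DD act n c)"

end

theory Submission
  imports Defs HOL.Modules
begin

(* Write the (k+2)-tuple as xs @ [g, h]. Every face of the coboundary except the last two
  (merging g with h, and dropping h) keeps h as the last entry, so on those faces \<partial> commutes
  with taking the face: they reproduce \<partial>(\<delta> c) up to its last face. The two remaining faces and
  that last face combine, by act (act a g) h = act a (g h), into the signed term \<partial>\<partial>c.
  For c = D a this turns \<delta> D into \<partial> applied to the previous \<delta> D, and (3) follows by
  induction. *)

lemma right_action_mult:
  assumes "right_action G act" and "g \<in> carrier G" and "h \<in> carrier G"
  shows "act (act a g) h = act a (g \<otimes>\<^bsub>G\<^esub> h)"
  using assms by (simp add: right_action_def)

lemma additive_right_action:
  assumes "right_action G act" and "h \<in> carrier G"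
  shows "additive (\<lambda>a. act a h)"
  using assms by unfold_locales (simp add: right_action_def)

lemma (in additive) signed: "f (signed i x) = signed i (f x)"
  by (simp add: signed_def minus)

lemma pd_snoc: "length xs = k \<Longrightarrow> pd act k c (xs @ [h]) = act (c xs) h - c xs"
  by (simp add: pd_def nth_append)

lemma merge_at_append:
  assumes "1 \<le> i" and "i < length xs"
  shows "merge_at G i (xs @ ys) = merge_at G i xs @ ys"
proof -
  have "i - 1 < length xs" using assms by linarith
  then show ?thesis using assms by (simp add: merge_at_def nth_append)
qed

lemma length_merge_at:
  assumes "1 \<le> i" and "i < length xs"
  shows "length (merge_at G i xs) = length xs - 1"
  using assms by (simp add: merge_at_def)

lemma merge_at_last_two: "length xs = k \<Longrightarrow> merge_at G (Suc k) (xs @ [g, h]) = xs @ [g \<otimes>\<^bsub>G\<^esub> h]"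
  by (simp add: merge_at_def nth_append)

lemma cobd_pd_last_two:
  assumes ra: "right_action G act" and xs: "length xs = k"
    and g: "g \<in> carrier G" and h: "h \<in> carrier G"
  defines "gs \<equiv> xs @ [g, h]"
  shows "cobd G (Suc k) (pd act k c) gs
           = pd act (Suc k) (cobd G k c) gs + signed (Suc k) (pd act (Suc k) (pd act k c) gs)"
proof -
  define T where "T = xs @ [g]"
  define \<delta> where "\<delta> x = act x h - x" for x
  interpret act_h: additive "\<lambda>a. act a h"
    using additive_right_action[OF ra h] .
  interpret additive \<delta>
    by unfold_locales (simp add: \<delta>_def act_h.add)
  have gs: "gs = T @ [h]" and lT: "length T = Suc k"
    by (simp_all add: gs_def T_def xs)
  have "tl gs = tl T @ [h]"
    by (cases xs) (simp_all add: gs T_def)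
  then have tl: "pd act k c (tl gs) = \<delta> (c (tl T))"
    using lT by (simp add: pd_snoc \<delta>_def)
  have merge: "pd act k c (merge_at G i gs) = \<delta> (c (merge_at G i T))" if "i \<in> {1..k}" for i
    using that lT by (simp add: gs merge_at_append length_merge_at pd_snoc \<delta>_def)
  have merge_last: "pd act k c (merge_at G (Suc k) gs) = act (c xs) (g \<otimes>\<^bsub>G\<^esub> h) - c xs"
    by (simp add: gs_def merge_at_last_two xs pd_snoc)
  have last: "pd act k c (take (Suc k) gs) = act (c xs) g - c xs"
    using lT by (simp add: gs T_def xs pd_snoc)
  have L: "cobd G (Suc k) (pd act k c) gs
      = \<delta> (c (tl T)) + (\<Sum>i=1..k. signed i (\<delta> (c (merge_at G i T))))
        + signed (Suc k) (act (c xs) (g \<otimes>\<^bsub>G\<^esub> h) - c xs)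
        + signed (Suc (Suc k)) (act (c xs) g - c xs)"
    by (simp add: cobd_def tl merge merge_last last add.assoc)
  have "pd act (Suc k) (cobd G k c) gs = \<delta> (cobd G k c T)"
    using lT by (simp only: gs pd_snoc \<delta>_def)
  also have "\<dots> = \<delta> (c (tl T)) + (\<Sum>i=1..k. signed i (\<delta> (c (merge_at G i T))))
      + signed (Suc k) (act (c xs) h - c xs)"
    by (simp add: cobd_def T_def xs add signed sum flip: \<delta>_def)
  finally have R1: "pd act (Suc k) (cobd G k c) gs = \<dots>" .
  have "pd act (Suc k) (pd act k c) gs = \<delta> (act (c xs) g - c xs)"
    using lT by (simp only: gs pd_snoc \<delta>_def) (simp add: T_def xs pd_snoc)
  also have "\<dots> = (act (c xs) (g \<otimes>\<^bsub>G\<^esub> h) - c xs) - (act (c xs) h - c xs) - (act (c xs) g - c xs)"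
    by (simp add: \<delta>_def act_h.diff right_action_mult[OF ra g h])
  finally have R2: "pd act (Suc k) (pd act k c) gs = \<dots>" .
  show ?thesis
    unfolding L R1 R2 by (simp add: signed_def algebra_simps)
qed

lemma cobd_pd:
  assumes ra: "right_action G act"
    and gs: "length gs = Suc (Suc k)" "set gs \<subseteq> carrier G"
  shows "cobd G (Suc k) (pd act k c) gs
           = pd act (Suc k) (cobd G k c) gs + signed (Suc k) (pd act (Suc k) (pd act k c) gs)"
proof -
  obtain xs g h where gs_eq: "gs = xs @ [g, h]" and xs: "length xs = k"
    using gs(1) by (metis append.assoc append_Cons append_Nil length_Suc_conv_rev)
  have "g \<in> carrier G" "h \<in> carrier G"
    using gs(2) by (simp_all add: gs_eq)
  then show ?thesis
    unfolding gs_eq by (rule cobd_pd_last_two[OF ra xs])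
qed

lemma cobd_DD:
  assumes ra: "right_action G act"
  shows "length gs = Suc n \<Longrightarrow> set gs \<subseteq> carrier G \<Longrightarrow>
    cobd G n (DD act n (\<lambda>_. a)) gs = (if odd n then - DD act (Suc n) (\<lambda>_. a) gs else 0)"
proof (induction n arbitrary: gs)
  case 0
  then show ?case by (simp add: cobd_def signed_def)
next
  case (Suc m)
  obtain ys h where gs: "gs = ys @ [h]" and ys: "length ys = Suc m"
    using Suc.prems(1) by (metis length_Suc_conv_rev)
  have h: "h \<in> carrier G" and "set ys \<subseteq> carrier G"
    using Suc.prems(2) by (simp_all add: gs)
  then have IH: "cobd G m (DD act m (\<lambda>_. a)) ys = (if odd m then - DD act (Suc m) (\<lambda>_. a) ys else 0)"
    using Suc.IH ys by blast
  interpret act_h: additive "\<lambda>a. act a h"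
    using additive_right_action[OF ra h] .
  have DD_Suc_Suc: "DD act (Suc (Suc m)) (\<lambda>_. a) gs
      = act (DD act (Suc m) (\<lambda>_. a) ys) h - DD act (Suc m) (\<lambda>_. a) ys"
    by (simp only: DD.simps(2)[of act "Suc m"] gs pd_snoc[OF ys])
  have "cobd G (Suc m) (DD act (Suc m) (\<lambda>_. a)) gs
      = pd act (Suc m) (cobd G m (DD act m (\<lambda>_. a))) gs
        + signed (Suc m) (DD act (Suc (Suc m)) (\<lambda>_. a) gs)"
    using cobd_pd[OF ra Suc.prems] by simp
  also have "pd act (Suc m) (cobd G m (DD act m (\<lambda>_. a))) gs
      = (if odd m then - (act (DD act (Suc m) (\<lambda>_. a) ys) h - DD act (Suc m) (\<lambda>_. a) ys) else 0)"
    by (simp only: gs pd_snoc[OF ys] IH) (simp add: act_h.minus act_h.zero)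
  finally show ?case
    using DD_Suc_Suc by (simp add: signed_def del: DD.simps)
qed

theorem lemma1p21:
  fixes G :: "('g, 'b) monoid_scheme" and act :: "'a::ab_group_add \<Rightarrow> 'g \<Rightarrow> 'a"
  assumes "group G" and "right_action G act"
  shows "(\<forall>n\<ge>1. \<forall>c\<in>cochains G (n - 1). \<forall>gs. length gs = n + 1 \<and> set gs \<subseteq> carrier G \<longrightarrow>
            cobd G n (pd act (n - 1) c) gs
              = pd act n (cobd G (n - 1) c) gs + signed n (pd act n (pd act (n - 1) c) gs))
       \<and> (\<forall>n\<ge>1. \<forall>a. \<forall>gs. length gs = n + 1 \<and> set gs \<subseteq> carrier G \<longrightarrow>
            cobd G n (DD act n (\<lambda>_. a)) gs
              = pd act n (cobd G (n - 1) (DD act (n - 1) (\<lambda>_. a))) gs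
                + signed n (DD act (n + 1) (\<lambda>_. a) gs))
       \<and> (\<forall>n. \<forall>a. \<forall>gs. length gs = n + 1 \<and> set gs \<subseteq> carrier G \<longrightarrow>
            cobd G n (DD act n (\<lambda>_. a)) gs
              = (if odd n then - DD act (n + 1) (\<lambda>_. a) gs else 0))"
proof (intro conjI allI impI ballI)
  fix n c gs
  assume "1 \<le> n" and gs: "length gs = n + 1 \<and> set gs \<subseteq> carrier G"
  then obtain k where "n = Suc k"
    by (cases n) auto
  then show "cobd G n (pd act (n - 1) c) gs
              = pd act n (cobd G (n - 1) c) gs + signed n (pd act n (pd act (n - 1) c) gs)"
    using cobd_pd[OF assms(2), of gs k c] gs by simp
next
  fix n a gs
  assume "1 \<le> n" and gs: "length gs = n + 1 \<and> set gs \<subseteq> carrier G"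
  then obtain k where "n = Suc k"
    by (cases n) auto
  then show "cobd G n (DD act n (\<lambda>_. a)) gs
              = pd act n (cobd G (n - 1) (DD act (n - 1) (\<lambda>_. a))) gs
                + signed n (DD act (n + 1) (\<lambda>_. a) gs)"
    using cobd_pd[OF assms(2), of gs k "DD act k (\<lambda>_. a)"] gs by simp
next
  fix n a gs
  assume "length gs = n + 1 \<and> set gs \<subseteq> carrier G"
  then show "cobd G n (DD act n (\<lambda>_. a)) gs = (if odd n then - DD act (n + 1) (\<lambda>_. a) gs else 0)"
    using cobd_DD[OF assms(2), of gs n a] by simp
qed

end
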